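(* Let $\mathbb G$ be a Carnot group and $j\in\{1,\dots,n_1\}$. (1) For every $s\in\mathbb R$ the maps $\Pi_{s,j}\to\Pi_j$ given by $x\mapsto\exp(-sX_j)x$, $x\mapsto x\exp(-sX_j)$ and $x\mapsto\mathrm{Pr}_j(x)$ are diffeomorphisms of $\Pi_{s,j}$ onto $\Pi_j$ with Jacobian $1$. (2) The Jacobi matrix of $\mathrm{Pr}_j:\mathbb G\to\Pi_j$ in the basis $X_j,X_1,\dots,X_{j-1},X_{j+1},\dots,X_N$ (i.e. with $x_j$ as the first coordinate) has the form $D\mathrm{Pr}_j(x)=\begin{pmatrix}0&T_j(x)\end{pmatrix}$ where $\det T_j(x)=1$.
   Context: $\mathbb{G}$ is a Carnot group: Lie algebra $\mathfrak{g}=V_1\oplus\dots\oplus V_m$ of left-invariant vector fields with $[V_1,V_k]=V_{k+1}$ ($V_{m+1}=\{0\}$), $n_1=\dim V_1$, $N=\dim\mathfrak g$; basis $X_1,\dots,X_N$ ordered by degree, each $V_k$ spanned by a subcollection; points identified with canonical coordinates $(x_1,\dots,x_N)=\exp(\sum x_iX_i)(e)$. For $s\in\mathbb R$, $\Pi_{s,j}=\{x:x_j=s\}$, $\Pi_j=\Pi_{0,j}$; every $x$ is uniquely $x=p\exp(x_jX_j)$ with $p\in\Pi_j$, and $\mathrm{Pr}_j(x):=p$. Jacobians are with respect to Lebesgue measure in the coordinates (on the hyperplanes, $(N-1)$-dimensional Lebesgue measure). *)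

theory Defs
  imports "HOL-Analysis.Analysis"
begin

fun Ck :: "nat \<Rightarrow> 'a::real_normed_vector set \<Rightarrow> ('a \<Rightarrow> 'b::real_normed_vector) \<Rightarrow> bool" where
  "Ck 0 U f = continuous_on U f"
| "Ck (Suc k) U f =
     (\<exists>f'. (\<forall>x\<in>U. (f has_derivative f' x) (at x)) \<and> (\<forall>v. Ck k U (\<lambda>x. f' x v)))"

definition smooth_on :: "'a::real_normed_vector set \<Rightarrow> ('a \<Rightarrow> 'b::real_normed_vector) \<Rightarrow> bool" where
  "smooth_on U f \<longleftrightarrow> open U \<and> (\<forall>k. Ck k U f)"

definition smooth_near :: "'a::real_normed_vector set \<Rightarrow> ('a \<Rightarrow> 'b::real_normed_vector) \<Rightarrow> bool" where
  "smooth_near S f \<longleftrightarrow> (\<exists>U. S \<subseteq> U \<and> smooth_on U f)"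

text \<open>Leibniz determinant of a square matrix indexed by a finite set S (entry A k i: row k, column i).\<close>
definition det_on :: "'i set \<Rightarrow> ('i \<Rightarrow> 'i \<Rightarrow> real) \<Rightarrow> real" where
  "det_on S A = (\<Sum>p | p permutes S. of_int (sign p) * (\<Prod>k\<in>S. A k (p k)))"

text \<open>Left-invariant vector field with value v at the identity: X^v(x) = d/dt (x * tv) at t=0.\<close>
definition lvf :: "(real^'n \<Rightarrow> real^'n \<Rightarrow> real^'n) \<Rightarrow> real^'n \<Rightarrow> real^'n \<Rightarrow> real^'n::finite" where
  "lvf gmul v x = frechet_derivative (gmul x) (at 0) v"

definition XX :: "(real^'n \<Rightarrow> real^'n \<Rightarrow> real^'n) \<Rightarrow> 'n::finite \<Rightarrow> real^'n \<Rightarrow> real^'n" where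
  "XX gmul i = lvf gmul (axis i 1)"

text \<open>Lie bracket of the Lie algebra (identified with the tangent space at 0):
  [X^u, X^v](0) where [X,Y] = DY.X - DX.Y is the commutator of vector fields.\<close>
definition lie_br :: "(real^'n \<Rightarrow> real^'n \<Rightarrow> real^'n) \<Rightarrow> real^'n \<Rightarrow> real^'n \<Rightarrow> real^'n::finite" where
  "lie_br gmul u v =
     frechet_derivative (lvf gmul v) (at 0) (lvf gmul u 0)
     - frechet_derivative (lvf gmul u) (at 0) (lvf gmul v 0)"

definition layer :: "('n::finite \<Rightarrow> nat) \<Rightarrow> nat \<Rightarrow> (real^'n) set" where
  "layer deg k = span {axis i 1 | i. deg i = k}"

text \<open>carnot gmul deg m: R^N with product gmul is a Lie group (smooth group law, identity 0)
  in canonical (exponential) coordinates of the first kind w.r.t. the basis X_i,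
  i.e. exp(sum v_i X_i)(e) = v, equivalently t \<mapsto> t v is a one-parameter subgroup;
  its Lie algebra is stratified, V_k spanned by the X_i with deg i = k, k = 1..m,
  [V_1,V_k] = V_{k+1}, V_{m+1} = 0.\<close>
definition carnot :: "(real^'n \<Rightarrow> real^'n \<Rightarrow> real^'n) \<Rightarrow> ('n::finite \<Rightarrow> nat) \<Rightarrow> nat \<Rightarrow> bool" where
  "carnot gmul deg m \<longleftrightarrow>
     (\<forall>x y z. gmul (gmul x y) z = gmul x (gmul y z)) \<and>
     (\<forall>x. gmul 0 x = x \<and> gmul x 0 = x) \<and>
     (\<forall>x. \<exists>y. gmul x y = 0 \<and> gmul y x = 0) \<and>
     smooth_on UNIV (\<lambda>p. gmul (fst p) (snd p)) \<and>
     (\<forall>v s t. gmul (s *\<^sub>R v) (t *\<^sub>R v) = (s + t) *\<^sub>R v) \<and>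
     (\<forall>i. 1 \<le> deg i \<and> deg i \<le> m) \<and>
     (\<forall>k\<ge>1. span {lie_br gmul u v | u v. u \<in> layer deg 1 \<and> v \<in> layer deg k}
              = layer deg (k + 1))"

text \<open>exp(s X_j)(e) in canonical coordinates.\<close>
definition expX :: "'n::finite \<Rightarrow> real \<Rightarrow> real^'n" where
  "expX j s = s *\<^sub>R axis j 1"

definition Pi_hyp :: "real \<Rightarrow> 'n::finite \<Rightarrow> (real^'n) set" where
  "Pi_hyp s j = {x. x $ j = s}"

definition Pr :: "(real^'n \<Rightarrow> real^'n \<Rightarrow> real^'n) \<Rightarrow> 'n::finite \<Rightarrow> real^'n \<Rightarrow> real^'n" where
  "Pr gmul j x = (THE p. p \<in> Pi_hyp 0 j \<and> x = gmul p (expX j (x $ j)))"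

text \<open>F is a diffeomorphism of S = Pi_{s,j} onto T = Pi_j whose Jacobian (w.r.t. the
  (N-1)-dimensional Lebesgue measures, coordinates x_k, k \<noteq> j) equals 1.\<close>
definition hyp_diffeo_jac1 ::
  "'n::finite \<Rightarrow> (real^'n) set \<Rightarrow> (real^'n) set \<Rightarrow> (real^'n \<Rightarrow> real^'n) \<Rightarrow> bool" where
  "hyp_diffeo_jac1 j S T F \<longleftrightarrow>
     bij_betw F S T \<and> smooth_near S F \<and>
     (\<exists>G. smooth_near T G \<and> (\<forall>y\<in>T. G y \<in> S \<and> F (G y) = y) \<and> (\<forall>x\<in>S. G (F x) = x)) \<and>
     (\<forall>x\<in>S. det_on {k. k \<noteq> j}
                (\<lambda>k i. frechet_derivative F (at x) (axis i 1) $ k) = 1)"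

end

theory Submission
  imports Defs
begin

text \<open>In canonical coordinates every ray \<open>t \<mapsto> t v\<close> is a one-parameter subgroup, so the
  inverse of \<open>x\<close> is \<open>- x\<close> and \<open>Pr\<^sub>j x = x exp (- x\<^sub>j X\<^sub>j)\<close>.  The key point
  is that the differentials of left and right translations and of conjugations are
  unitriangular with respect to the grading by degree: their matrices are the identity
  up to entries that go from lower to strictly higher degree.  For left translations this
  comes from the differential of the exponential map: \<open>F s = exp (- s v) d/dt exp (s (v + t w))\<close>
  solves \<open>F' = w - [v, F]\<close>, and brackets raise the degree, by the stratification
  \<open>[V\<^sub>1, V\<^sub>k] = V\<^sub>k\<^sub>+\<^sub>1\<close> together with the Jacobi identity (which in turn holds because
  \<open>Ad\<close> preserves brackets and differentiates to \<open>ad\<close>).  Unitriangular matrices have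
  determinant 1, and the coordinate \<open>x\<^sub>j\<close> of degree 1 is additive, which gives part (1).
  For part (2), along the integral curve of \<open>X\<^sub>i\<close> through \<open>x\<close> the projection is a left
  translate of the conjugation by \<open>exp (x\<^sub>j X\<^sub>j)\<close>, so \<open>T\<close> is the unitriangular matrix of
  \<open>Ad (exp (x\<^sub>j X\<^sub>j))\<close>; \<open>X\<^sub>j\<close> is annihilated because \<open>Pr\<^sub>j\<close> is constant along its
  integral curves.\<close>

definition smooth :: "('a::euclidean_space \<Rightarrow> 'b::real_normed_vector) \<Rightarrow> bool" where
  "smooth f \<longleftrightarrow> (\<forall>k. Ck k UNIV f)"

lemma smooth_on_UNIV_iff: "smooth_on UNIV f \<longleftrightarrow> smooth f"
  by (simp add: smooth_on_def smooth_def)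

lemma Ck_imp_continuous_on:
  assumes "Ck k U f"
  shows "continuous_on U f"
proof (cases k)
  case 0
  then show ?thesis using assms by simp
next
  case (Suc n)
  then obtain f' where "\<forall>x\<in>U. (f has_derivative f' x) (at x)"
    using assms by auto
  then show ?thesis
    using continuous_at_imp_continuous_on has_derivative_continuous by blast
qed

lemma Ck_Suc_imp_Ck: "Ck (Suc k) U f \<Longrightarrow> Ck k U f"
proof (induction k arbitrary: f)
  case 0
  then show ?case using Ck_imp_continuous_on[OF "0.prems"] by simp
next
  case (Suc k)
  then obtain f' where "\<forall>x\<in>U. (f has_derivative f' x) (at x)" "\<forall>v. Ck (Suc k) U (\<lambda>x. f' x v)"
    unfolding Ck.simps(2) by blast
  with Suc.IH show ?case unfolding Ck.simps(2) by blast
qed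

lemma Ck_const: "Ck k U (\<lambda>x. c)"
proof (induction k arbitrary: c)
  case (Suc k)
  show ?case by (auto intro!: exI[of _ "\<lambda>x v. 0"] Suc.IH)
qed simp

lemma Ck_add: "Ck k U f \<Longrightarrow> Ck k U g \<Longrightarrow> Ck k U (\<lambda>x. f x + g x)"
proof (induction k arbitrary: f g)
  case 0
  then show ?case by (simp add: continuous_on_add)
next
  case (Suc k)
  then obtain f' g' where
    "\<forall>x\<in>U. (f has_derivative f' x) (at x)" "\<forall>v. Ck k U (\<lambda>x. f' x v)"
    "\<forall>x\<in>U. (g has_derivative g' x) (at x)" "\<forall>v. Ck k U (\<lambda>x. g' x v)"
    by auto
  with Suc.IH show ?case
    by (auto intro!: exI[of _ "\<lambda>x v. f' x v + g' x v"] has_derivative_add)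
qed

lemma Ck_bounded_linear_comp:
  assumes "bounded_linear L"
  shows "Ck k U f \<Longrightarrow> Ck k U (\<lambda>x. L (f x))"
proof (induction k arbitrary: f)
  case 0
  then show ?case
    using continuous_on_compose[of U f L] linear_continuous_on[OF assms]
    by (simp add: comp_def continuous_on_subset)
next
  case (Suc k)
  then obtain f' where "\<forall>x\<in>U. (f has_derivative f' x) (at x)" "\<forall>v. Ck k U (\<lambda>x. f' x v)"
    by auto
  with Suc.IH show ?case
    by (auto intro!: exI[of _ "\<lambda>x v. L (f' x v)"] bounded_linear.has_derivative[OF assms])
qed

lemma Ck_scaleR: "Ck k U a \<Longrightarrow> Ck k U b \<Longrightarrow> Ck k U (\<lambda>x. a x *\<^sub>R b x)"
proof (induction k arbitrary: a b)
  case 0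
  then show ?case by (simp add: continuous_on_scaleR)
next
  case (Suc k)
  then obtain a' b' where
    "\<forall>x\<in>U. (a has_derivative a' x) (at x)" "\<forall>v. Ck k U (\<lambda>x. a' x v)"
    "\<forall>x\<in>U. (b has_derivative b' x) (at x)" "\<forall>v. Ck k U (\<lambda>x. b' x v)"
    by auto
  moreover have "Ck k U a" "Ck k U b" using Suc.prems Ck_Suc_imp_Ck by auto
  ultimately show ?case
    using Suc.IH
    by (auto intro!: exI[of _ "\<lambda>x v. a x *\<^sub>R b' x v + a' x v *\<^sub>R b x"] has_derivative_scaleR Ck_add)
qed

lemma Ck_sum:
  "finite S \<Longrightarrow> (\<And>i. i \<in> S \<Longrightarrow> Ck k U (f i)) \<Longrightarrow> Ck k U (\<lambda>x. \<Sum>i\<in>S. f i x)"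
  by (induction S rule: finite_induct) (simp_all add: Ck_const Ck_add)

lemma Ck_Pair: "Ck k U f \<Longrightarrow> Ck k U g \<Longrightarrow> Ck k U (\<lambda>x. (f x, g x))"
proof (induction k arbitrary: f g)
  case 0
  then show ?case by (simp add: continuous_on_Pair)
next
  case (Suc k)
  then obtain f' g' where
    "\<forall>x\<in>U. (f has_derivative f' x) (at x)" "\<forall>v. Ck k U (\<lambda>x. f' x v)"
    "\<forall>x\<in>U. (g has_derivative g' x) (at x)" "\<forall>v. Ck k U (\<lambda>x. g' x v)"
    by auto
  with Suc.IH show ?case
    by (auto intro!: exI[of _ "\<lambda>x v. (f' x v, g' x v)"] has_derivative_Pair)
qed

lemma linear_euclidean_expansion:
  assumes "linear f"
  shows "f w = (\<Sum>b\<in>Basis. (w \<bullet> b) *\<^sub>R f b)"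
  using linear_sum[OF assms] linear_scale[OF assms] euclidean_representation[of w]
  by (metis (no_types, lifting) sum.cong)

lemma linear_axis_expansion:
  assumes "linear F"
  shows "F c = (\<Sum>l\<in>UNIV. c $ l *\<^sub>R F (axis l 1))"
  using linear_euclidean_expansion[OF assms, of c]
  by (simp add: Basis_vec_def cart_eq_inner_axis sum.reindex axis_eq_axis inj_on_def inner_commute
      UNION_singleton_eq_range)

text \<open>Expanding \<open>f' (g x) (g' x v)\<close> in a basis of the Euclidean middle space reduces it to
  the inductive hypothesis for the partial derivatives of \<open>f\<close>.\<close>

lemma Ck_compose:
  fixes f :: "'b::euclidean_space \<Rightarrow> 'c::real_normed_vector"
    and g :: "'a::real_normed_vector \<Rightarrow> 'b"
  shows "Ck k UNIV f \<Longrightarrow> Ck k UNIV g \<Longrightarrow> Ck k UNIV (\<lambda>x. f (g x))"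
proof (induction k arbitrary: f g)
  case 0
  then show ?case
    using continuous_on_compose[of UNIV g f] by (simp add: comp_def continuous_on_subset)
next
  case (Suc k)
  then obtain f' g' where f': "\<forall>x. (f has_derivative f' x) (at x)" "\<forall>v. Ck k UNIV (\<lambda>x. f' x v)"
    and g': "\<forall>x. (g has_derivative g' x) (at x)" "\<forall>v. Ck k UNIV (\<lambda>x. g' x v)"
    by auto
  have "Ck k UNIV g" by (rule Ck_Suc_imp_Ck[OF Suc.prems(2)])
  then have "Ck k UNIV (\<lambda>x. f' (g x) b)" for b
    using Suc.IH f'(2) by blast
  then have "Ck k UNIV (\<lambda>x. \<Sum>b\<in>Basis. (g' x v \<bullet> b) *\<^sub>R f' (g x) b)" for v
    using g'(2)
    by (intro Ck_sum Ck_scaleR Ck_bounded_linear_comp[OF bounded_linear_inner_left]) auto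
  moreover have "f' (g x) (g' x v) = (\<Sum>b\<in>Basis. (g' x v \<bullet> b) *\<^sub>R f' (g x) b)" for x v
    using f' has_derivative_linear linear_euclidean_expansion by blast
  moreover have "((\<lambda>x. f (g x)) has_derivative (\<lambda>v. f' (g x) (g' x v))) (at x)" for x
    using diff_chain_at[OF g'(1)[rule_format] f'(1)[rule_format]] by (simp add: comp_def)
  ultimately show ?case by (auto intro!: exI[of _ "\<lambda>x v. f' (g x) (g' x v)"])
qed

declare Ck.simps(2)[simp del]

abbreviation DD :: "('a::real_normed_vector \<Rightarrow> 'b::real_normed_vector) \<Rightarrow> 'a \<Rightarrow> 'a \<Rightarrow> 'b" where
  "DD f x \<equiv> frechet_derivative f (at x)"

lemma smooth_has_derivative:
  assumes "smooth f"
  shows "(f has_derivative DD f x) (at x)"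
proof -
  obtain f' where "\<forall>x. (f has_derivative f' x) (at x)"
    using assms[unfolded smooth_def, rule_format, of "Suc 0"] unfolding Ck.simps(2) by blast
  then show ?thesis using frechet_derivative_at by metis
qed

lemma smooth_DD:
  assumes "smooth f"
  shows "smooth (\<lambda>x. DD f x v)"
  unfolding smooth_def
proof
  fix k
  obtain f' where f': "\<forall>x. (f has_derivative f' x) (at x)" "\<forall>v. Ck k UNIV (\<lambda>x. f' x v)"
    using assms[unfolded smooth_def, rule_format, of "Suc k"] unfolding Ck.simps(2) by blast
  have "f' x = DD f x" for x using f'(1) frechet_derivative_at by blast
  with f'(2) show "Ck k UNIV (\<lambda>x. DD f x v)" by simp
qed

lemma smoothI:
  assumes "\<And>x. (f has_derivative f' x) (at x)" "\<And>v. smooth (\<lambda>x. f' x v)"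
  shows "smooth f"
  unfolding smooth_def
proof
  fix k
  show "Ck k UNIV f"
  proof (cases k)
    case 0
    have "continuous_on UNIV f"
      using assms(1) continuous_at_imp_continuous_on has_derivative_continuous by blast
    with 0 show ?thesis by simp
  next
    case (Suc n)
    show ?thesis using assms unfolding Suc smooth_def Ck.simps(2) by blast
  qed
qed

lemma smooth_isCont: "smooth f \<Longrightarrow> isCont f x"
  unfolding smooth_def
  using Ck_imp_continuous_on continuous_on_eq_continuous_at by blast

lemma smooth_const: "smooth (\<lambda>x. c)"
  unfolding smooth_def using Ck_const by blast

lemma smooth_add: "smooth f \<Longrightarrow> smooth g \<Longrightarrow> smooth (\<lambda>x. f x + g x)"
  unfolding smooth_def using Ck_add by blast

lemma smooth_scaleR: "smooth a \<Longrightarrow> smooth b \<Longrightarrow> smooth (\<lambda>x. a x *\<^sub>R b x)"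
  unfolding smooth_def using Ck_scaleR by blast

lemma smooth_bounded_linear_comp: "bounded_linear L \<Longrightarrow> smooth f \<Longrightarrow> smooth (\<lambda>x. L (f x))"
  unfolding smooth_def using Ck_bounded_linear_comp by blast

lemma smooth_compose: "smooth f \<Longrightarrow> smooth g \<Longrightarrow> smooth (\<lambda>x. f (g x))"
  unfolding smooth_def using Ck_compose by blast

lemma smooth_Pair: "smooth f \<Longrightarrow> smooth g \<Longrightarrow> smooth (\<lambda>x. (f x, g x))"
  unfolding smooth_def using Ck_Pair by blast

lemma smooth_bounded_linear: "bounded_linear L \<Longrightarrow> smooth L"
  by (rule smoothI[of L "\<lambda>x. L"]) (auto intro: bounded_linear_imp_has_derivative smooth_const)

lemma smooth_ident: "smooth (\<lambda>x. x)"
  using smooth_bounded_linear[OF bounded_linear_ident] by (simp add: id_def)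

lemma smooth_minus: "smooth f \<Longrightarrow> smooth (\<lambda>x. - f x)"
  using smooth_bounded_linear_comp[OF bounded_linear_minus[OF bounded_linear_ident]] by auto

lemma smooth_diff: "smooth f \<Longrightarrow> smooth g \<Longrightarrow> smooth (\<lambda>x. f x - g x)"
  using smooth_add[of f "\<lambda>x. - g x"] smooth_minus by auto

lemma smooth_vec_nth: "smooth f \<Longrightarrow> smooth (\<lambda>x. f x $ i)"
  using smooth_bounded_linear_comp[OF bounded_linear_vec_nth] by blast

lemma smooth_fst: "smooth fst" and smooth_snd: "smooth snd"
  by (simp_all add: smooth_bounded_linear bounded_linear_fst bounded_linear_snd)

lemmas smooth_intros =
  smooth_const smooth_ident smooth_add smooth_diff smooth_minus smooth_scaleR
  smooth_vec_nth smooth_fst smooth_snd smooth_Pair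

lemma DD_eqI: "(f has_derivative f') (at x) \<Longrightarrow> DD f x w = f' w"
  by (metis frechet_derivative_at)

lemma linear_DD: "smooth f \<Longrightarrow> linear (DD f x)"
  using smooth_has_derivative has_derivative_linear by blast

lemma DD_compose:
  assumes "smooth f" "smooth g"
  shows "DD (\<lambda>x. f (g x)) x w = DD f (g x) (DD g x w)"
  using diff_chain_at[OF smooth_has_derivative[OF assms(2)] smooth_has_derivative[OF assms(1)]]
  by (intro DD_eqI) (simp add: comp_def)

lemma DD_ident: "DD (\<lambda>x. x) x w = w"
  by (rule DD_eqI) (rule has_derivative_ident)

lemma DD_const: "DD (\<lambda>x. c) x w = 0"
  by (rule DD_eqI) (rule has_derivative_const)

lemma DD_add:
  "smooth f \<Longrightarrow> smooth g \<Longrightarrow> DD (\<lambda>x. f x + g x) x w = DD f x w + DD g x w"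
  by (intro DD_eqI has_derivative_add smooth_has_derivative)

lemma DD_diff:
  "smooth f \<Longrightarrow> smooth g \<Longrightarrow> DD (\<lambda>x. f x - g x) x w = DD f x w - DD g x w"
  by (intro DD_eqI has_derivative_diff smooth_has_derivative)

lemma DD_minus: "smooth f \<Longrightarrow> DD (\<lambda>x. - f x) x w = - DD f x w"
  by (intro DD_eqI has_derivative_minus smooth_has_derivative)

lemma DD_scaleR:
  "smooth a \<Longrightarrow> smooth b \<Longrightarrow> DD (\<lambda>x. a x *\<^sub>R b x) x w = a x *\<^sub>R DD b x w + DD a x w *\<^sub>R b x"
  by (intro DD_eqI has_derivative_scaleR smooth_has_derivative)

lemma DD_Pair: "smooth f \<Longrightarrow> smooth g \<Longrightarrow> DD (\<lambda>x. (f x, g x)) x w = (DD f x w, DD g x w)"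
  by (intro DD_eqI has_derivative_Pair smooth_has_derivative)

lemma DD_sum:
  "finite S \<Longrightarrow> (\<And>i. i \<in> S \<Longrightarrow> smooth (f i)) \<Longrightarrow>
    DD (\<lambda>x. \<Sum>i\<in>S. f i x) x w = (\<Sum>i\<in>S. DD (f i) x w)"
  by (intro DD_eqI has_derivative_sum smooth_has_derivative)

lemma DD_vec_nth: "smooth f \<Longrightarrow> DD (\<lambda>x. f x $ k) x w = DD f x w $ k"
  by (intro DD_eqI bounded_linear.has_derivative[OF bounded_linear_vec_nth] smooth_has_derivative)

lemma DD_ray: "DD (\<lambda>t::real. t *\<^sub>R c) s h = h *\<^sub>R c"
  by (rule DD_eqI) (auto intro!: derivative_eq_intros)

lemma DD_fix_snd:
  assumes "smooth f"
  shows "DD (\<lambda>x. f (x, c)) x v = DD f (x, c) (v, 0)"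
proof -
  have "DD (\<lambda>x. (x, c)) x v = (v, 0)" by (rule DD_eqI) (auto intro!: derivative_eq_intros)
  then show ?thesis using DD_compose[OF assms, of "\<lambda>x. (x, c)"] by (simp add: smooth_intros)
qed

lemma DD_fix_fst:
  assumes "smooth f"
  shows "DD (\<lambda>y. f (c, y)) y v = DD f (c, y) (0, v)"
proof -
  have "DD (\<lambda>y. (c, y)) y v = (0, v)" by (rule DD_eqI) (auto intro!: derivative_eq_intros)
  then show ?thesis using DD_compose[OF assms, of "\<lambda>y. (c, y)"] by (simp add: smooth_intros)
qed

lemma DD_translate:
  assumes "smooth f"
  shows "DD (\<lambda>x. f (x + c)) x v = DD f (x + c) v"
proof -
  have "DD (\<lambda>x. x + c) x v = v" by (rule DD_eqI) (auto intro!: derivative_eq_intros)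
  then show ?thesis using DD_compose[OF assms, of "\<lambda>x. x + c"] by (simp add: smooth_intros)
qed

lemma DD_bilinear:
  fixes B :: "'a::euclidean_space \<Rightarrow> 'b::euclidean_space \<Rightarrow> 'c::euclidean_space"
  assumes "bilinear B" "smooth f" "smooth g"
  shows "DD (\<lambda>x. B (f x) (g x)) x w = B (f x) (DD g x w) + B (DD f x w) (g x)"
  using bounded_bilinear.FDERIV[OF bilinear_conv_bounded_bilinear[THEN iffD1, OF assms(1)]
      smooth_has_derivative[OF assms(2)] smooth_has_derivative[OF assms(3)]]
  by (rule DD_eqI)

lemma DD_zero_imp_constant:
  assumes "smooth f" "\<And>x v. DD f x v = 0"
  shows "f x = f y"
proof -
  have "DD f z = (\<lambda>v. 0)" for z by (simp add: fun_eq_iff assms(2))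
  then have "(f has_derivative (\<lambda>v. 0)) (at z within UNIV)" for z
    using smooth_has_derivative[OF assms(1), of z] by simp
  then show ?thesis by (intro has_derivative_zero_unique[of UNIV f x y]) auto
qed

lemma DD_real_scale:
  fixes \<phi> :: "real \<Rightarrow> 'b::real_normed_vector"
  assumes "smooth \<phi>"
  shows "DD \<phi> s h = h *\<^sub>R DD \<phi> s 1"
  using linear_scale[OF linear_DD[OF assms], of s h 1] by simp

context
  fixes F :: "'a::euclidean_space \<Rightarrow> real^'n \<Rightarrow> 'c::real_normed_vector"
  assumes linear_F: "\<And>x. linear (F x)" and smooth_F: "\<And>b. smooth (\<lambda>x. F x b)"
begin

lemma DD_linear_family:
  "DD (\<lambda>x. F x c) y w = (\<Sum>l\<in>UNIV. c $ l *\<^sub>R DD (\<lambda>x. F x (axis l 1)) y w)"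
proof -
  have "DD (\<lambda>x. F x c) y w = DD (\<lambda>x. \<Sum>l\<in>UNIV. c $ l *\<^sub>R F x (axis l 1)) y w"
    by (subst linear_axis_expansion[OF linear_F]) (rule refl)
  also have "\<dots> = (\<Sum>l\<in>UNIV. c $ l *\<^sub>R DD (\<lambda>x. F x (axis l 1)) y w)"
    by (simp add: DD_sum DD_scaleR DD_const smooth_intros smooth_F)
  finally show ?thesis .
qed

lemma linear_DD_linear_family: "linear (\<lambda>c. DD (\<lambda>x. F x c) y w)"
proof -
  have "(\<lambda>c. DD (\<lambda>x. F x c) y w) = (\<lambda>c. \<Sum>l\<in>UNIV. c $ l *\<^sub>R DD (\<lambda>x. F x (axis l 1)) y w)"
    by (rule ext) (rule DD_linear_family)
  then show ?thesis
    by (simp add: linearI sum.distrib scaleR_add_left scaleR_sum_right)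
qed

lemma DD_linear_family_apply:
  fixes a :: "'a \<Rightarrow> real^'n"
  assumes a: "smooth a"
  shows "DD (\<lambda>x. F x (a x)) y w = DD (\<lambda>x. F x (a y)) y w + F y (DD a y w)"
proof -
  have "DD (\<lambda>x. F x (a x)) y w = DD (\<lambda>x. \<Sum>l\<in>UNIV. a x $ l *\<^sub>R F x (axis l 1)) y w"
    by (subst linear_axis_expansion[OF linear_F]) (rule refl)
  also have "\<dots> = (\<Sum>l\<in>UNIV. a y $ l *\<^sub>R DD (\<lambda>x. F x (axis l 1)) y w + DD a y w $ l *\<^sub>R F y (axis l 1))"
    using a by (simp add: DD_sum DD_scaleR DD_vec_nth smooth_intros smooth_F)
  also have "\<dots> = DD (\<lambda>x. F x (a y)) y w + F y (DD a y w)"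
    by (simp add: sum.distrib DD_linear_family[of "a y"] linear_axis_expansion[OF linear_F, of y "DD a y w"])
  finally show ?thesis .
qed

end

section \<open>Symmetry of second derivatives\<close>

lemma mvt_along_ray:
  fixes G :: "'a::euclidean_space \<Rightarrow> real"
  assumes "smooth G" "h > 0"
  shows "\<exists>t. 0 < t \<and> t < h \<and> G (q + h *\<^sub>R d) - G q = h * DD G (q + t *\<^sub>R d) d"
proof -
  have "((\<lambda>s. G (q + s *\<^sub>R d)) has_real_derivative DD G (q + s *\<^sub>R d) d) (at s)" for s
  proof -
    have "((\<lambda>s. q + s *\<^sub>R d) has_derivative (\<lambda>s'. s' *\<^sub>R d)) (at s)"
      by (auto intro!: derivative_eq_intros)
    from diff_chain_at[OF this smooth_has_derivative[OF assms(1)]]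
    have "((\<lambda>s. G (q + s *\<^sub>R d)) has_derivative (\<lambda>s'. DD G (q + s *\<^sub>R d) (s' *\<^sub>R d))) (at s)"
      by (simp add: comp_def)
    moreover have "(\<lambda>s'. DD G (q + s *\<^sub>R d) (s' *\<^sub>R d)) = (*) (DD G (q + s *\<^sub>R d) d)"
      by (rule ext) (simp add: linear_scale[OF linear_DD[OF assms(1)]] mult.commute)
    ultimately show ?thesis
      unfolding has_field_derivative_def by simp
  qed
  from MVT2[OF assms(2) this] show ?thesis by auto
qed

lemma second_difference_mvt:
  fixes g :: "'a::euclidean_space \<Rightarrow> real"
  assumes g: "smooth g" and h: "h > 0"
  shows "\<exists>\<xi>. norm (\<xi> - p) \<le> h * (norm u + norm v) \<and>
    g (p + h *\<^sub>R v + h *\<^sub>R u) - g (p + h *\<^sub>R v) - g (p + h *\<^sub>R u) + g p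
      = h * h * DD (\<lambda>y. DD g y v) \<xi> u"
proof -
  define G where "G = (\<lambda>x. g (x + h *\<^sub>R u) - g x)"
  have "smooth G"
    unfolding G_def using g by (intro smooth_intros smooth_compose[OF g])
  then obtain s where s: "0 < s" "s < h" "G (p + h *\<^sub>R v) - G p = h * DD G (p + s *\<^sub>R v) v"
    using mvt_along_ray[OF _ h] by blast
  have "DD G (p + s *\<^sub>R v) v = DD g (p + s *\<^sub>R v + h *\<^sub>R u) v - DD g (p + s *\<^sub>R v) v"
    unfolding G_def
    by (subst DD_diff) (auto intro!: smooth_intros smooth_compose[OF g] simp: DD_translate[OF g])
  moreover obtain t where t: "0 < t" "t < h"
    "DD g (p + s *\<^sub>R v + h *\<^sub>R u) v - DD g (p + s *\<^sub>R v) v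
      = h * DD (\<lambda>y. DD g y v) (p + s *\<^sub>R v + t *\<^sub>R u) u"
    using mvt_along_ray[OF smooth_DD[OF g] h, of "p + s *\<^sub>R v" u] by blast
  moreover have "norm (s *\<^sub>R v + t *\<^sub>R u) \<le> h * (norm u + norm v)"
  proof -
    have "norm (s *\<^sub>R v + t *\<^sub>R u) \<le> s * norm v + t * norm u"
      using norm_triangle_ineq[of "s *\<^sub>R v" "t *\<^sub>R u"] s t by simp
    also have "\<dots> \<le> h * norm v + h * norm u"
      using s t by (intro add_mono mult_right_mono) auto
    finally show ?thesis by (simp add: algebra_simps)
  qed
  ultimately show ?thesis
    using s unfolding G_def
    by (intro exI[of _ "p + s *\<^sub>R v + t *\<^sub>R u"]) (simp add: algebra_simps)
qed

lemma second_difference_mvt_symmetric: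
  fixes g :: "'a::euclidean_space \<Rightarrow> real"
  assumes g: "smooth g" and h: "h > 0"
  shows "\<exists>\<xi> \<eta>. norm (\<xi> - p) \<le> h * (norm u + norm v) \<and> norm (\<eta> - p) \<le> h * (norm u + norm v) \<and>
    DD (\<lambda>y. DD g y v) \<xi> u = DD (\<lambda>y. DD g y u) \<eta> v"
proof -
  obtain \<xi> where \<xi>: "norm (\<xi> - p) \<le> h * (norm u + norm v)"
    "g (p + h *\<^sub>R v + h *\<^sub>R u) - g (p + h *\<^sub>R v) - g (p + h *\<^sub>R u) + g p
      = h * h * DD (\<lambda>y. DD g y v) \<xi> u"
    using second_difference_mvt[OF g h] by blast
  obtain \<eta> where \<eta>: "norm (\<eta> - p) \<le> h * (norm v + norm u)"
    "g (p + h *\<^sub>R u + h *\<^sub>R v) - g (p + h *\<^sub>R u) - g (p + h *\<^sub>R v) + g p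
      = h * h * DD (\<lambda>y. DD g y u) \<eta> v"
    using second_difference_mvt[OF g h] by blast
  have "h * h * DD (\<lambda>y. DD g y v) \<xi> u = h * h * DD (\<lambda>y. DD g y u) \<eta> v"
    using \<xi>(2) \<eta>(2) by (simp add: algebra_simps)
  then show ?thesis
    using \<xi>(1) \<eta>(1) h by (auto simp: add.commute)
qed

text \<open>Both mixed partials are limits of the same symmetric second difference divided by
  \<open>h\<^sup>2\<close>.\<close>

lemma DD_DD_commute_real:
  fixes g :: "'a::euclidean_space \<Rightarrow> real"
  assumes g: "smooth g"
  shows "DD (\<lambda>x. DD g x u) p v = DD (\<lambda>x. DD g x v) p u"
proof -
  define Q where "Q = (\<lambda>v u x. DD (\<lambda>y. DD g y v) x u)"
  define h :: "nat \<Rightarrow> real" where "h n = 1 / Suc n" for n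
  have "h n > 0" for n by (simp add: h_def)
  then have "\<forall>n. \<exists>\<xi> \<eta>. norm (\<xi> - p) \<le> h n * (norm u + norm v) \<and>
      norm (\<eta> - p) \<le> h n * (norm u + norm v) \<and> Q v u \<xi> = Q u v \<eta>"
    unfolding Q_def using second_difference_mvt_symmetric[OF g] by blast
  then obtain \<xi> \<eta> where \<xi>\<eta>: "\<And>n. norm (\<xi> n - p) \<le> h n * (norm u + norm v)"
      "\<And>n. norm (\<eta> n - p) \<le> h n * (norm u + norm v)" "\<And>n. Q v u (\<xi> n) = Q u v (\<eta> n)"
    by metis
  have lim: "(\<lambda>n. h n * (norm u + norm v)) \<longlonglongrightarrow> 0"
    by (rule tendsto_mult_left_zero) (unfold h_def, rule LIMSEQ_Suc[OF lim_inverse_n'])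
  have "(\<lambda>n. \<xi> n - p) \<longlonglongrightarrow> 0" "(\<lambda>n. \<eta> n - p) \<longlonglongrightarrow> 0"
    using \<xi>\<eta>(1,2) by (simp_all add: Lim_null_comparison[OF always_eventually lim])
  then have "\<xi> \<longlonglongrightarrow> p" "\<eta> \<longlonglongrightarrow> p" by (simp_all add: LIM_zero_cancel)
  moreover have "isCont (Q a b) p" for a b unfolding Q_def by (intro smooth_isCont smooth_DD g)
  ultimately have "(\<lambda>n. Q v u (\<xi> n)) \<longlonglongrightarrow> Q v u p" "(\<lambda>n. Q u v (\<eta> n)) \<longlonglongrightarrow> Q u v p"
    by (simp_all add: isCont_tendsto_compose)
  then have "Q v u p = Q u v p"
    using \<xi>\<eta>(3) LIMSEQ_unique by auto
  then show ?thesis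
    unfolding Q_def ..
qed

lemma DD_DD_commute:
  fixes f :: "'a::euclidean_space \<Rightarrow> real^'n"
  assumes f: "smooth f"
  shows "DD (\<lambda>x. DD f x u) p v = DD (\<lambda>x. DD f x v) p u"
proof -
  have "DD (\<lambda>x. DD f x u) p v $ k = DD (\<lambda>x. DD f x v) p u $ k" for k
  proof -
    have "(\<lambda>x. DD f x w $ k) = (\<lambda>x. DD (\<lambda>x. f x $ k) x w)" for w
      using DD_vec_nth[OF f] by simp
    then show ?thesis
      using DD_vec_nth[OF smooth_DD[OF f]] DD_DD_commute_real[OF smooth_vec_nth[OF f]] by metis
  qed
  then show ?thesis by (simp add: vec_eq_iff)
qed

section \<open>Linear maps that are unitriangular with respect to a grading\<close>

lemma linear_component_expansion:
  fixes L :: "real^'n \<Rightarrow> real^'m"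
  assumes "linear L"
  shows "L z $ k = (\<Sum>l\<in>UNIV. z $ l * L (axis l 1) $ k)"
  using Cartesian_Space.linear_componentwise linear_matrix_vector_mul_eq assms by blast

definition unitriangular :: "('n::finite \<Rightarrow> nat) \<Rightarrow> (real^'n \<Rightarrow> real^'n) \<Rightarrow> bool" where
  "unitriangular deg L \<longleftrightarrow>
     (\<forall>i k. deg k \<le> deg i \<longrightarrow> L (axis i 1) $ k = (if k = i then 1 else 0))"

lemma unitriangular_comp:
  assumes "linear L" "unitriangular deg L" "unitriangular deg M"
  shows "unitriangular deg (\<lambda>z. L (M z))"
  unfolding unitriangular_def
proof (intro allI impI)
  fix i k assume ki: "deg k \<le> deg i"
  have "M (axis i 1) $ l * L (axis l 1) $ k = (if l = i then L (axis i 1) $ k else 0)" for l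
  proof (cases "deg l \<le> deg i")
    case True
    then show ?thesis using assms(3) unfolding unitriangular_def by auto
  next
    case False
    then have "L (axis l 1) $ k = 0" using assms(2) ki unfolding unitriangular_def by force
    then show ?thesis using False by auto
  qed
  then have "L (M (axis i 1)) $ k = L (axis i 1) $ k"
    unfolding linear_component_expansion[OF assms(1), of "M (axis i 1)"] by simp
  also have "\<dots> = (if k = i then 1 else 0)"
    using assms(2) ki unfolding unitriangular_def by auto
  finally show "L (M (axis i 1)) $ k = (if k = i then 1 else 0)" .
qed

lemma unitriangular_right_inverse:
  assumes "linear L" "\<And>z. L (M z) = z" "unitriangular deg L"
  shows "unitriangular deg M"
  unfolding unitriangular_def
proof (intro allI)
  fix i k
  show "deg k \<le> deg i \<longrightarrow> M (axis i 1) $ k = (if k = i then 1 else 0)"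
  proof (induction "deg k" arbitrary: k rule: less_induct)
    case less
    show ?case
    proof
      assume ki: "deg k \<le> deg i"
      have "M (axis i 1) $ l * L (axis l 1) $ k = (if l = k then M (axis i 1) $ k else 0)" for l
      proof (cases "deg l < deg k")
        case True
        then show ?thesis using less ki by auto
      next
        case False
        then show ?thesis using assms(3) unfolding unitriangular_def by auto
      qed
      then have "L (M (axis i 1)) $ k = M (axis i 1) $ k"
        unfolding linear_component_expansion[OF assms(1), of "M (axis i 1)"] by simp
      then show "M (axis i 1) $ k = (if k = i then 1 else 0)"
        using assms(2) by (simp add: axis_def)
    qed
  qed
qed

lemma unitriangular_component_min_deg:
  assumes "linear L" "unitriangular deg L" "\<And>i. deg k \<le> deg i"
  shows "L z $ k = z $ k"
proof -
  have "z $ l * L (axis l 1) $ k = (if l = k then z $ k else 0)" for l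
    using assms(2,3) unfolding unitriangular_def by auto
  then show ?thesis unfolding linear_component_expansion[OF assms(1), of z] by simp
qed

lemma permutes_deg_decreasing_eq_id:
  fixes deg :: "'i \<Rightarrow> nat"
  assumes p: "p permutes S" and "finite S"
    and dec: "\<And>k. k \<in> S \<Longrightarrow> p k = k \<or> deg (p k) < deg k"
  shows "p = id"
proof (rule ccontr)
  assume "p \<noteq> id"
  then obtain k0 where "p k0 \<noteq> k0" by (auto simp: fun_eq_iff)
  then have "k0 \<in> S" using p by (meson permutes_not_in)
  have "(\<Sum>k\<in>S. deg (p k)) < (\<Sum>k\<in>S. deg k)"
    using dec \<open>p k0 \<noteq> k0\<close> \<open>k0 \<in> S\<close>
    by (intro sum_strict_mono_ex1[OF \<open>finite S\<close>]) force+
  moreover have "(\<Sum>k\<in>S. deg (p k)) = (\<Sum>k\<in>S. deg k)"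
    using sum.permute[OF p, of deg] by (simp add: comp_def)
  ultimately show False by simp
qed

text \<open>Only the identity permutation contributes to the Leibniz formula.\<close>

lemma det_on_unitriangular:
  fixes deg :: "'i \<Rightarrow> nat"
  assumes "finite S"
    and M: "\<And>i k. i \<in> S \<Longrightarrow> k \<in> S \<Longrightarrow> deg k \<le> deg i \<Longrightarrow> M k i = (if k = i then 1 else 0)"
  shows "det_on S M = 1"
proof -
  have "(\<Prod>k\<in>S. M k (p k)) = 0" if p: "p permutes S" "p \<noteq> id" for p
  proof (rule ccontr)
    assume "(\<Prod>k\<in>S. M k (p k)) \<noteq> 0"
    then have nz: "M k (p k) \<noteq> 0" if "k \<in> S" for k using that \<open>finite S\<close> by auto
    have "p k = k \<or> deg (p k) < deg k" if "k \<in> S" for k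
      using M[of "p k" k] nz[OF that] that permutes_in_image[OF p(1)]
      by (cases "deg k \<le> deg (p k)") (auto split: if_splits)
    then show False using permutes_deg_decreasing_eq_id[OF p(1) \<open>finite S\<close>] p(2) by blast
  qed
  then have "det_on S M = (\<Sum>p\<in>{p. p permutes S}. if p = id then 1 else 0)"
    unfolding det_on_def using M
    by (intro sum.cong) (auto simp: sign_id intro!: prod.neutral)
  also have "\<dots> = 1"
    using finite_permutations[OF \<open>finite S\<close>] permutes_id[of S] by (simp add: sum.delta')
  finally show ?thesis .
qed

locale carnot_group =
  fixes gmul :: "real^'n::finite \<Rightarrow> real^'n \<Rightarrow> real^'n"
    and deg :: "'n \<Rightarrow> nat" and m :: nat
  assumes carnot: "carnot gmul deg m"
begin

lemma mult_assoc: "gmul (gmul x y) z = gmul x (gmul y z)"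
  using carnot unfolding carnot_def by blast

lemma mult_zero_left [simp]: "gmul 0 x = x" and mult_zero_right [simp]: "gmul x 0 = x"
  using carnot unfolding carnot_def by blast+

lemma mult_scaleR_scaleR: "gmul (s *\<^sub>R v) (t *\<^sub>R v) = (s + t) *\<^sub>R v"
  using carnot unfolding carnot_def by blast

lemma deg_ge_1: "1 \<le> deg i"
  using carnot unfolding carnot_def by blast

lemma span_lie_br_layers: "k \<ge> 1 \<Longrightarrow>
  span {lie_br gmul u v | u v. u \<in> layer deg 1 \<and> v \<in> layer deg k} = layer deg (k + 1)"
  using carnot unfolding carnot_def by blast

lemma smooth_mult_pair: "smooth (\<lambda>p. gmul (fst p) (snd p))"
  using carnot unfolding carnot_def smooth_on_UNIV_iff by blast

lemma mult_neg_right [simp]: "gmul x (- x) = 0"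
  using mult_scaleR_scaleR[of 1 x "- 1"] by simp

lemma mult_neg_left [simp]: "gmul (- x) x = 0"
  using mult_scaleR_scaleR[of "- 1" x 1] by simp

lemma mult_neg_cancel_left [simp]: "gmul (- a) (gmul a x) = x"
  by (metis mult_assoc mult_zero_left mult_neg_left)

lemma mult_cancel_neg_left [simp]: "gmul a (gmul (- a) x) = x"
  by (metis mult_assoc mult_zero_left mult_neg_right)

lemma neg_mult: "- gmul x y = gmul (- y) (- x)"
proof -
  have "gmul (gmul x y) (gmul (- y) (- x)) = 0"
    by (simp flip: mult_assoc) (simp add: mult_assoc)
  then have "gmul (- gmul x y) (gmul (gmul x y) (gmul (- y) (- x))) = - gmul x y"
    by simp
  then show ?thesis by simp
qed

lemma smooth_mult: "smooth f \<Longrightarrow> smooth g \<Longrightarrow> smooth (\<lambda>x. gmul (f x) (g x))"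
  using smooth_compose[OF smooth_mult_pair smooth_Pair] by simp

lemma smooth_mult_left: "smooth (gmul c)"
  using smooth_mult[OF smooth_const smooth_ident] by simp

lemma smooth_mult_right: "smooth (\<lambda>x. gmul x c)"
  using smooth_mult[OF smooth_ident smooth_const] by simp

definition Dl :: "real^'n \<Rightarrow> real^'n \<Rightarrow> real^'n \<Rightarrow> real^'n" where
  "Dl x y = DD (\<lambda>z. gmul z y) x"

definition Dr :: "real^'n \<Rightarrow> real^'n \<Rightarrow> real^'n \<Rightarrow> real^'n" where
  "Dr x y = DD (gmul x) y"

lemma Dl_eq: "Dl x y a = DD (\<lambda>p. gmul (fst p) (snd p)) (x, y) (a, 0)"
  unfolding Dl_def using DD_fix_snd[OF smooth_mult_pair, of y x a] by simp

lemma Dr_eq: "Dr x y b = DD (\<lambda>p. gmul (fst p) (snd p)) (x, y) (0, b)"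
  unfolding Dr_def using DD_fix_fst[OF smooth_mult_pair, of x y b] by simp

lemma linear_Dl: "linear (Dl x y)"
  unfolding Dl_def by (rule linear_DD[OF smooth_mult_right])

lemma linear_Dr: "linear (Dr x y)"
  unfolding Dr_def by (rule linear_DD[OF smooth_mult_left])

lemma smooth_Dl: "smooth f \<Longrightarrow> smooth g \<Longrightarrow> smooth (\<lambda>x. Dl (f x) (g x) a)"
  unfolding Dl_eq by (intro smooth_compose[OF smooth_DD[OF smooth_mult_pair]] smooth_Pair)

lemma smooth_Dr: "smooth f \<Longrightarrow> smooth g \<Longrightarrow> smooth (\<lambda>x. Dr (f x) (g x) a)"
  unfolding Dr_eq by (intro smooth_compose[OF smooth_DD[OF smooth_mult_pair]] smooth_Pair)

lemma Dr_zero_left [simp]: "Dr 0 y b = b"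
proof -
  have "gmul 0 = (\<lambda>x. x)" by (rule ext) simp
  then show ?thesis unfolding Dr_def by (simp add: DD_ident)
qed

lemma Dl_zero_right [simp]: "Dl x 0 a = a"
  unfolding Dl_def by (simp add: DD_ident)

lemma DD_mult:
  assumes "smooth f" "smooth g"
  shows "DD (\<lambda>x. gmul (f x) (g x)) x w = Dl (f x) (g x) (DD f x w) + Dr (f x) (g x) (DD g x w)"
proof -
  let ?\<mu> = "\<lambda>p. gmul (fst p) (snd p)"
  have "DD (\<lambda>x. ?\<mu> (f x, g x)) x w = DD ?\<mu> (f x, g x) (DD f x w, DD g x w)"
    using DD_compose[OF smooth_mult_pair smooth_Pair[OF assms]] DD_Pair[OF assms] by simp
  also have "\<dots> = DD ?\<mu> (f x, g x) ((DD f x w, 0) + (0, DD g x w))"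
    by simp
  also have "\<dots> = DD ?\<mu> (f x, g x) (DD f x w, 0) + DD ?\<mu> (f x, g x) (0, DD g x w)"
    by (rule linear_add[OF linear_DD[OF smooth_mult_pair]])
  finally show ?thesis by (simp add: Dl_eq Dr_eq)
qed

lemma DD_mult_left:
  "smooth g \<Longrightarrow> DD (\<lambda>x. gmul c (g x)) x w = Dr c (g x) (DD g x w)"
  using DD_mult[OF smooth_const] by (simp add: DD_const linear_0[OF linear_Dl])

lemma DD_mult_right:
  "smooth f \<Longrightarrow> DD (\<lambda>x. gmul (f x) c) x w = Dl (f x) c (DD f x w)"
  using DD_mult[OF _ smooth_const] by (simp add: DD_const linear_0[OF linear_Dr])

definition dL :: "real^'n \<Rightarrow> real^'n \<Rightarrow> real^'n" where
  "dL x = Dr x 0"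

lemma lvf_eq_dL: "lvf gmul w x = dL x w"
  unfolding lvf_def dL_def Dr_def ..

lemma XX_eq_dL: "XX gmul i x = dL x (axis i 1)"
  unfolding XX_def lvf_eq_dL ..

lemma linear_dL: "linear (dL x)"
  unfolding dL_def by (rule linear_Dr)

lemma smooth_dL: "smooth (\<lambda>x. dL x w)"
  unfolding dL_def by (rule smooth_Dr[OF smooth_ident smooth_const])

lemma dL_zero [simp]: "dL 0 w = w"
  unfolding dL_def by simp

lemma lie_br_eq: "lie_br gmul u v = DD (\<lambda>x. dL x v) 0 u - DD (\<lambda>x. dL x u) 0 v"
  unfolding lie_br_def lvf_eq_dL[abs_def] by simp

lemma DD_mult_ray: "DD (\<lambda>t::real. gmul x (t *\<^sub>R c)) 0 1 = dL x c"
  using DD_mult_left[of "\<lambda>t. t *\<^sub>R c" x 0 1] by (simp add: smooth_intros DD_ray dL_def)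

end

section \<open>The Lie bracket\<close>

context carnot_group
begin

lemma DD_hom_lie_br:
  assumes sm: "smooth \<phi>" and hom0: "\<phi> 0 = 0" and hom: "\<And>x y. \<phi> (gmul x y) = gmul (\<phi> x) (\<phi> y)"
  shows "DD \<phi> 0 (lie_br gmul u v) = lie_br gmul (DD \<phi> 0 u) (DD \<phi> 0 v)"
proof -
  have intertwine: "DD \<phi> x (dL x v) = dL (\<phi> x) (DD \<phi> 0 v)" for x v
  proof -
    have "DD (\<lambda>y. \<phi> (gmul x y)) 0 v = DD \<phi> x (dL x v)"
      using DD_compose[OF sm smooth_mult_left, of x 0 v] by (simp add: dL_def Dr_def)
    moreover have "DD (\<lambda>y. gmul (\<phi> x) (\<phi> y)) 0 v = dL (\<phi> x) (DD \<phi> 0 v)"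
      using DD_mult_left[OF sm, of "\<phi> x" 0 v] by (simp add: dL_def hom0)
    ultimately show ?thesis using hom by simp
  qed
  have second: "DD \<phi> 0 (DD (\<lambda>x. dL x v) 0 u)
      = DD (\<lambda>y. dL y (DD \<phi> 0 v)) 0 (DD \<phi> 0 u) - DD (\<lambda>y. DD \<phi> y v) 0 u" for u v
  proof -
    have "DD (\<lambda>x. DD \<phi> x (dL x v)) 0 u = DD (\<lambda>x. DD \<phi> x v) 0 u + DD \<phi> 0 (DD (\<lambda>x. dL x v) 0 u)"
      using DD_linear_family_apply[OF linear_DD[OF sm] smooth_DD[OF sm] smooth_dL] by simp
    moreover have "DD (\<lambda>x. dL (\<phi> x) (DD \<phi> 0 v)) 0 u = DD (\<lambda>y. dL y (DD \<phi> 0 v)) 0 (DD \<phi> 0 u)"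
      using DD_compose[OF smooth_dL sm] hom0 by simp
    ultimately show ?thesis using intertwine by (simp add: eq_diff_eq add.commute)
  qed
  have "DD \<phi> 0 (lie_br gmul u v) = DD \<phi> 0 (DD (\<lambda>x. dL x v) 0 u) - DD \<phi> 0 (DD (\<lambda>x. dL x u) 0 v)"
    unfolding lie_br_eq by (rule linear_diff[OF linear_DD[OF sm]])
  also have "\<dots> = DD (\<lambda>y. dL y (DD \<phi> 0 v)) 0 (DD \<phi> 0 u) - DD (\<lambda>y. dL y (DD \<phi> 0 u)) 0 (DD \<phi> 0 v)"
    unfolding second DD_DD_commute[OF sm, of v 0 u] by simp
  also have "\<dots> = lie_br gmul (DD \<phi> 0 u) (DD \<phi> 0 v)"
    unfolding lie_br_eq ..
  finally show ?thesis .
qed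

lemma bilinear_lie_br: "bilinear (lie_br gmul)"
  unfolding bilinear_def lie_br_eq
  using linear_DD[OF smooth_dL] linear_DD_linear_family[OF linear_dL smooth_dL]
  by (auto intro: linear_compose_sub)

definition gconj :: "real^'n \<Rightarrow> real^'n \<Rightarrow> real^'n" where
  "gconj g y = gmul (gmul g y) (- g)"

lemma smooth_gconj_pair: "smooth (\<lambda>q. gconj (fst q) (snd q))"
  unfolding gconj_def by (intro smooth_mult smooth_intros)

lemma smooth_gconj: "smooth (gconj g)"
  unfolding gconj_def by (intro smooth_mult smooth_intros)

definition Ad :: "real^'n \<Rightarrow> real^'n \<Rightarrow> real^'n" where
  "Ad g = DD (gconj g) 0"

lemma Ad_eq: "Ad g z = DD (\<lambda>q. gconj (fst q) (snd q)) (g, 0) (0, z)"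
  unfolding Ad_def using DD_fix_fst[OF smooth_gconj_pair, of g 0 z] by simp

lemma smooth_Ad: "smooth f \<Longrightarrow> smooth (\<lambda>h. Ad (f h) z)"
  unfolding Ad_eq by (intro smooth_compose[OF smooth_DD[OF smooth_gconj_pair]] smooth_intros)

lemma Ad_zero [simp]: "Ad 0 z = z"
proof -
  have "gconj 0 = (\<lambda>y. y)" by (rule ext) (simp add: gconj_def)
  then show ?thesis unfolding Ad_def by (simp add: DD_ident)
qed

lemma Ad_lie_br: "Ad g (lie_br gmul u w) = lie_br gmul (Ad g u) (Ad g w)"
  unfolding Ad_def
  by (rule DD_hom_lie_br[OF smooth_gconj]) (simp_all add: gconj_def mult_assoc)

definition ad :: "real^'n \<Rightarrow> real^'n \<Rightarrow> real^'n" where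
  "ad v z = DD (\<lambda>h::real. Ad (h *\<^sub>R v) z) 0 1"

lemma DD_gconj_at_zero: "DD (\<lambda>g. gconj g y) 0 v = Dl 0 y v - dL y v"
proof -
  have "DD (\<lambda>g. gconj g y) 0 v = Dl y 0 (Dl 0 y v) + Dr y 0 (- v)"
    unfolding gconj_def
    using DD_mult[OF smooth_mult_right[of y] smooth_minus[OF smooth_ident], of 0 v]
    by (simp add: DD_minus[OF smooth_ident] DD_ident Dl_def[symmetric])
  then show ?thesis by (simp add: linear_neg[OF linear_Dr] dL_def)
qed

text \<open>Both sides are the mixed second partial derivative of the group law at \<open>(0, 0)\<close>.\<close>

lemma DD_Dl_eq_DD_dL: "DD (\<lambda>y. Dl 0 y v) 0 z = DD (\<lambda>x. dL x z) 0 v"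
proof -
  let ?\<mu> = "\<lambda>p. gmul (fst p) (snd p)"
  have "DD (\<lambda>y. Dl 0 y v) 0 z = DD (\<lambda>q. DD ?\<mu> q (v, 0)) (0, 0) (0, z)"
    unfolding Dl_eq by (rule DD_fix_fst[OF smooth_DD[OF smooth_mult_pair]])
  also have "\<dots> = DD (\<lambda>q. DD ?\<mu> q (0, z)) (0, 0) (v, 0)"
    by (rule DD_DD_commute[OF smooth_mult_pair])
  also have "\<dots> = DD (\<lambda>x. dL x z) 0 v"
    unfolding dL_def Dr_eq by (rule DD_fix_snd[OF smooth_DD[OF smooth_mult_pair], symmetric])
  finally show ?thesis .
qed

lemma ad_eq_lie_br: "ad v z = lie_br gmul v z"
proof -
  let ?c = "\<lambda>q. gconj (fst q) (snd q)"
  have curve: "DD (\<lambda>h::real. (h *\<^sub>R v, 0::real^'n)) 0 1 = (v, 0)"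
    by (simp add: DD_Pair smooth_intros DD_ray DD_const)
  have "ad v z = DD (\<lambda>h. DD ?c (h *\<^sub>R v, 0) (0, z)) 0 1"
    unfolding ad_def Ad_eq ..
  also have "\<dots> = DD (\<lambda>q. DD ?c q (0, z)) (0, 0) (v, 0)"
    using DD_compose[OF smooth_DD[OF smooth_gconj_pair], of "\<lambda>h::real. (h *\<^sub>R v, 0)"] curve
    by (simp add: smooth_intros)
  also have "\<dots> = DD (\<lambda>q. DD ?c q (v, 0)) (0, 0) (0, z)"
    by (rule DD_DD_commute[OF smooth_gconj_pair])
  also have "\<dots> = DD (\<lambda>y. DD ?c (0, y) (v, 0)) 0 z"
    by (rule DD_fix_fst[OF smooth_DD[OF smooth_gconj_pair], symmetric])
  also have "(\<lambda>y. DD ?c (0, y) (v, 0)) = (\<lambda>y. Dl 0 y v - dL y v)"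
    using DD_fix_snd[OF smooth_gconj_pair] DD_gconj_at_zero by (simp add: fun_eq_iff)
  also have "DD (\<lambda>y. Dl 0 y v - dL y v) 0 z = DD (\<lambda>x. dL x z) 0 v - DD (\<lambda>y. dL y v) 0 z"
    by (simp add: DD_diff smooth_Dl smooth_intros smooth_dL DD_Dl_eq_DD_dL)
  finally show ?thesis unfolding lie_br_eq .
qed

lemma ad_lie_br: "ad v (lie_br gmul u w) = lie_br gmul (ad v u) w + lie_br gmul u (ad v w)"
proof -
  have "ad v (lie_br gmul u w) = DD (\<lambda>h::real. lie_br gmul (Ad (h *\<^sub>R v) u) (Ad (h *\<^sub>R v) w)) 0 1"
    unfolding ad_def Ad_lie_br ..
  also have "\<dots> = lie_br gmul (ad v u) w + lie_br gmul u (ad v w)"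
    by (simp add: DD_bilinear[OF bilinear_lie_br] smooth_Ad smooth_intros ad_def)
  finally show ?thesis .
qed

lemma jacobi:
  "lie_br gmul v (lie_br gmul u w) = lie_br gmul (lie_br gmul v u) w + lie_br gmul u (lie_br gmul v w)"
  using ad_lie_br[of v u w] by (simp add: ad_eq_lie_br)

end

section \<open>Brackets raise the degree filtration\<close>

context carnot_group
begin

definition Fil :: "nat \<Rightarrow> (real^'n) set" where
  "Fil d = {z. \<forall>i. deg i < d \<longrightarrow> z $ i = 0}"

lemma subspace_Fil: "subspace (Fil d)"
  unfolding subspace_def Fil_def by auto

lemma Fil_antimono: "d \<le> d' \<Longrightarrow> Fil d' \<subseteq> Fil d"
  unfolding Fil_def by auto

lemma axis_in_layer: "axis a 1 \<in> layer deg (deg a)"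
  unfolding layer_def by (rule span_base) auto

lemma layer_subset_Fil: "layer deg k \<subseteq> Fil k"
  unfolding layer_def
  by (rule span_minimal[OF _ subspace_Fil]) (auto simp: Fil_def axis_def)

definition raises_Fil :: "real^'n \<Rightarrow> bool" where
  "raises_Fil x \<longleftrightarrow> (\<forall>d. \<forall>z\<in>Fil d. lie_br gmul x z \<in> Fil (Suc d))"

lemma raises_FilD: "raises_Fil x \<Longrightarrow> z \<in> Fil d \<Longrightarrow> lie_br gmul x z \<in> Fil (Suc d)"
  unfolding raises_Fil_def by blast

lemma subspace_raises_Fil: "subspace {x. raises_Fil x}"
proof -
  have l: "linear (\<lambda>x. lie_br gmul x z)" for z
    using bilinear_lie_br unfolding bilinear_def by blast
  show ?thesis
    unfolding subspace_def raises_Fil_def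
    using linear_0[OF l] linear_add[OF l] linear_scale[OF l]
    by (auto intro: subspace_0[OF subspace_Fil] subspace_add[OF subspace_Fil] subspace_mul[OF subspace_Fil])
qed

lemma raises_Fil_axis:
  assumes "deg a = 1"
  shows "raises_Fil (axis a 1)"
  unfolding raises_Fil_def
proof (intro allI ballI)
  fix d and z :: "real^'n"
  assume z: "z \<in> Fil d"
  have "z $ l *\<^sub>R lie_br gmul (axis a 1) (axis l 1) \<in> Fil (Suc d)" for l
  proof (cases "deg l < d")
    case True
    then show ?thesis using z subspace_0[OF subspace_Fil] by (simp add: Fil_def)
  next
    case False
    have "lie_br gmul (axis a 1) (axis l 1)
        \<in> span {lie_br gmul u v | u v. u \<in> layer deg 1 \<and> v \<in> layer deg (deg l)}"
      using axis_in_layer[of a] axis_in_layer[of l] assms by (intro span_base) auto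
    also have "\<dots> = layer deg (deg l + 1)" by (rule span_lie_br_layers[OF deg_ge_1])
    also have "\<dots> \<subseteq> Fil (deg l + 1)" by (rule layer_subset_Fil)
    also have "\<dots> \<subseteq> Fil (Suc d)" using False by (intro Fil_antimono) simp
    finally show ?thesis by (rule subspace_mul[OF subspace_Fil])
  qed
  moreover have "linear (lie_br gmul (axis a 1))"
    using bilinear_lie_br unfolding bilinear_def by blast
  ultimately show "lie_br gmul (axis a 1) z \<in> Fil (Suc d)"
    by (simp add: linear_axis_expansion[of _ z] subspace_sum[OF subspace_Fil])
qed

lemma raises_Fil_lie_br:
  assumes u: "raises_Fil u" and v: "raises_Fil v"
  shows "raises_Fil (lie_br gmul u v)"
  unfolding raises_Fil_def
proof (intro allI ballI)
  fix d and z :: "real^'n"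
  assume "z \<in> Fil d"
  then have "lie_br gmul u (lie_br gmul v z) \<in> Fil (Suc (Suc d))"
    "lie_br gmul v (lie_br gmul u z) \<in> Fil (Suc (Suc d))"
    using u v by (simp_all add: raises_FilD)
  then have "lie_br gmul u (lie_br gmul v z) \<in> Fil (Suc d)" "lie_br gmul v (lie_br gmul u z) \<in> Fil (Suc d)"
    using Fil_antimono[of "Suc d" "Suc (Suc d)"] by auto
  then have "lie_br gmul u (lie_br gmul v z) - lie_br gmul v (lie_br gmul u z) \<in> Fil (Suc d)"
    by (rule subspace_diff[OF subspace_Fil])
  moreover have "lie_br gmul (lie_br gmul u v) z
      = lie_br gmul u (lie_br gmul v z) - lie_br gmul v (lie_br gmul u z)"
    using jacobi[of u v z] by (simp add: algebra_simps)
  ultimately show "lie_br gmul (lie_br gmul u v) z \<in> Fil (Suc d)" by simp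
qed

lemma layer_subset_raises_Fil: "n \<ge> 1 \<Longrightarrow> layer deg n \<subseteq> {x. raises_Fil x}"
proof (induction n rule: nat_induct_at_least)
  case base
  show ?case
    unfolding layer_def by (rule span_minimal[OF _ subspace_raises_Fil]) (auto intro: raises_Fil_axis)
next
  case (Suc n)
  have "layer deg 1 \<subseteq> {x. raises_Fil x}"
    unfolding layer_def by (rule span_minimal[OF _ subspace_raises_Fil]) (auto intro: raises_Fil_axis)
  with Suc.IH have "{lie_br gmul u v | u v. u \<in> layer deg 1 \<and> v \<in> layer deg n} \<subseteq> {x. raises_Fil x}"
    by (auto intro: raises_Fil_lie_br)
  then have "span {lie_br gmul u v | u v. u \<in> layer deg 1 \<and> v \<in> layer deg n} \<subseteq> {x. raises_Fil x}"
    by (rule span_minimal[OF _ subspace_raises_Fil])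
  then show ?case using span_lie_br_layers[OF Suc.hyps] by simp
qed

lemma lie_br_Fil:
  assumes "z \<in> Fil d"
  shows "lie_br gmul x z \<in> Fil (Suc d)"
proof -
  have "axis a 1 \<in> {x. raises_Fil x}" for a
    using layer_subset_raises_Fil[OF deg_ge_1] axis_in_layer by blast
  then have "(\<Sum>l\<in>UNIV. x $ l *\<^sub>R axis l 1) \<in> {x. raises_Fil x}"
    by (intro subspace_sum[OF subspace_raises_Fil] subspace_mul[OF subspace_raises_Fil])
  moreover have "(\<Sum>l\<in>UNIV. x $ l *\<^sub>R axis l 1) = x"
    using linear_axis_expansion[OF linear_id, of x] by simp
  ultimately have "raises_Fil x" by simp
  then show ?thesis using assms by (simp add: raises_FilD)
qed

end

section \<open>Unitriangularity of the differentials of the group law\<close>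

context carnot_group
begin

text \<open>\<open>dexp_triv v w s\<close> is the left-trivialised differential of the exponential map at \<open>s v\<close>,
  applied to \<open>s w\<close>, i.e. \<open>(1 - exp (- s ad v)) / ad v\<close> applied to \<open>w\<close>.  It vanishes at \<open>0\<close>
  and satisfies \<open>F' = w - [v, F]\<close>; since brackets raise the degree filtration, this ODE
  forces its low-degree components to be those of \<open>s w\<close>.\<close>

definition dexp_triv :: "real^'n \<Rightarrow> real^'n \<Rightarrow> real \<Rightarrow> real^'n" where
  "dexp_triv v w s = s *\<^sub>R Dr (- (s *\<^sub>R v)) (s *\<^sub>R v) w"

lemma smooth_dexp_triv: "smooth (dexp_triv v w)"
proof -
  have "dexp_triv v w = (\<lambda>s. s *\<^sub>R Dr (- (s *\<^sub>R v)) (s *\<^sub>R v) w)"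
    by (simp add: fun_eq_iff dexp_triv_def)
  then show ?thesis by (simp add: smooth_intros smooth_Dr)
qed

lemma dexp_triv_eq_DD: "dexp_triv v w s = DD (\<lambda>t::real. gmul (- (s *\<^sub>R v)) (s *\<^sub>R (v + t *\<^sub>R w))) 0 1"
proof -
  have "((\<lambda>t::real. s *\<^sub>R (v + t *\<^sub>R w)) has_derivative (\<lambda>t. s *\<^sub>R (t *\<^sub>R w))) (at 0)"
    by (auto intro!: derivative_eq_intros)
  from DD_eqI[OF this, of 1] have "DD (\<lambda>t::real. s *\<^sub>R (v + t *\<^sub>R w)) 0 1 = s *\<^sub>R w"
    by simp
  then show ?thesis
    using DD_mult_left[of "\<lambda>t. s *\<^sub>R (v + t *\<^sub>R w)" "- (s *\<^sub>R v)" 0 1]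
    by (simp add: smooth_intros dexp_triv_def linear_scale[OF linear_Dr])
qed

lemma dexp_triv_add: "dexp_triv v w (s + h) = Ad (- (h *\<^sub>R v)) (dexp_triv v w s) + dexp_triv v w h"
proof -
  define Y where "Y t = gmul (- (s *\<^sub>R v)) (s *\<^sub>R (v + t *\<^sub>R w))" for t :: real
  define Z where "Z t = gmul (- (h *\<^sub>R v)) (h *\<^sub>R (v + t *\<^sub>R w))" for t :: real
  define P where "P t = gconj (- (h *\<^sub>R v)) (Y t)" for t
  have sY: "smooth Y" and sZ: "smooth Z" and sP: "smooth P"
    unfolding Y_def[abs_def] Z_def[abs_def] P_def[abs_def] gconj_def
    by (intro smooth_mult smooth_intros)+
  have "gmul (- ((s + h) *\<^sub>R v)) ((s + h) *\<^sub>R (v + t *\<^sub>R w)) = gmul (P t) (Z t)" for t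
  proof -
    have "(s + h) *\<^sub>R (v + t *\<^sub>R w) = gmul (s *\<^sub>R (v + t *\<^sub>R w)) (h *\<^sub>R (v + t *\<^sub>R w))"
      by (rule mult_scaleR_scaleR[symmetric])
    moreover have "- ((s + h) *\<^sub>R v) = gmul (- (h *\<^sub>R v)) (- (s *\<^sub>R v))"
      using mult_scaleR_scaleR[of "- h" v "- s"] by (simp add: algebra_simps)
    ultimately show ?thesis by (simp add: P_def Y_def Z_def gconj_def mult_assoc)
  qed
  then have "dexp_triv v w (s + h) = DD (\<lambda>t. gmul (P t) (Z t)) 0 1"
    unfolding dexp_triv_eq_DD by simp
  also have "\<dots> = DD P 0 1 + DD Z 0 1"
    using DD_mult[OF sP sZ, of 0 1] by (simp add: P_def Y_def Z_def gconj_def)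
  also have "DD Z 0 1 = dexp_triv v w h"
    unfolding Z_def dexp_triv_eq_DD ..
  also have "DD P 0 1 = Ad (- (h *\<^sub>R v)) (dexp_triv v w s)"
  proof -
    have "DD Y 0 1 = dexp_triv v w s"
      unfolding Y_def[abs_def] dexp_triv_eq_DD ..
    then show ?thesis
      using DD_compose[OF smooth_gconj[of "- (h *\<^sub>R v)"] sY, of 0 1]
      by (simp add: P_def[abs_def] Ad_def Y_def)
  qed
  finally show ?thesis .
qed

lemma DD_dexp_triv: "DD (dexp_triv v w) s 1 = w - lie_br gmul v (dexp_triv v w s)"
proof -
  define c where "c = dexp_triv v w s"
  define G where "G h = Ad (- (h *\<^sub>R v)) c + dexp_triv v w h" for h
  have sG: "smooth G"
    unfolding G_def[abs_def] by (intro smooth_add smooth_Ad smooth_dexp_triv smooth_intros)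
  have "dexp_triv v w \<sigma> = G (\<sigma> + - s)" for \<sigma>
    using dexp_triv_add[of v w s "\<sigma> - s"] by (simp add: G_def c_def)
  then have "dexp_triv v w = (\<lambda>\<sigma>. G (\<sigma> + - s))" ..
  then have "DD (dexp_triv v w) s 1 = DD G 0 1"
    using DD_translate[OF sG, of "- s" s 1] by simp
  also have "\<dots> = DD (\<lambda>h. Ad (- (h *\<^sub>R v)) c) 0 1 + DD (dexp_triv v w) 0 1"
    unfolding G_def[abs_def] by (intro DD_add smooth_Ad smooth_dexp_triv smooth_intros)
  also have "DD (\<lambda>h. Ad (- (h *\<^sub>R v)) c) 0 1 = - ad v c"
  proof -
    have "DD (\<lambda>h. Ad (- (h *\<^sub>R v)) c) 0 1 = DD (\<lambda>h. Ad (h *\<^sub>R v) c) 0 (- 1)"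
      using DD_compose[OF smooth_Ad[of "\<lambda>h. h *\<^sub>R v" c] smooth_minus[OF smooth_ident], of 0 1]
      by (simp add: smooth_intros DD_minus[OF smooth_ident] DD_ident)
    also have "\<dots> = - ad v c"
      unfolding ad_def by (rule linear_neg[OF linear_DD[OF smooth_Ad]]) (simp add: smooth_intros)
    finally show ?thesis .
  qed
  also have "DD (dexp_triv v w) 0 1 = w"
  proof -
    have "dexp_triv v w = (\<lambda>s. s *\<^sub>R Dr (- (s *\<^sub>R v)) (s *\<^sub>R v) w)"
      by (simp add: fun_eq_iff dexp_triv_def)
    then show ?thesis
      by (simp add: DD_scaleR smooth_Dr smooth_intros DD_ident)
  qed
  finally show ?thesis by (simp add: c_def ad_eq_lie_br)
qed

lemma dexp_triv_component:
  assumes "deg k \<le> deg i"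
  shows "dexp_triv v (axis i 1) s $ k = s * (if k = i then 1 else 0)"
  using assms
proof (induction "deg k" arbitrary: k s rule: less_induct)
  case less
  let ?F = "dexp_triv v (axis i 1)"
  have "?F s \<in> Fil (deg k)" for s
    using less by (force simp: Fil_def)
  then have bracket: "lie_br gmul v (?F s) $ k = 0" for s
    using lie_br_Fil[of "?F s" "deg k" v] by (simp add: Fil_def)
  define \<phi> where "\<phi> s = ?F s $ k - s *\<^sub>R (if k = i then 1 else 0)" for s
  have s\<phi>: "smooth \<phi>"
    unfolding \<phi>_def[abs_def] by (intro smooth_intros smooth_dexp_triv)
  have "DD \<phi> s 1 = 0" for s
    unfolding \<phi>_def[abs_def]
    using DD_dexp_triv[of v "axis i 1" s] bracket[of s]
    by (simp add: DD_diff DD_vec_nth DD_scaleR smooth_intros smooth_dexp_triv DD_ident DD_const axis_def)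
  then have "\<phi> s = \<phi> 0"
    using DD_zero_imp_constant[OF s\<phi>] DD_real_scale[OF s\<phi>] by (metis scale_zero_right)
  then show ?case by (simp add: \<phi>_def dexp_triv_def)
qed

lemma unitriangular_Dr_neg: "unitriangular deg (Dr (- x) x)"
  unfolding unitriangular_def using dexp_triv_component[of _ _ x 1] by (simp add: dexp_triv_def)

lemma Dr_neg_dL: "Dr (- x) x (dL x z) = z"
  using DD_mult_left[OF smooth_mult_left, of "- x" x 0 z] by (simp add: DD_ident dL_def Dr_def)

lemma dL_Dr_neg: "dL x (Dr (- x) x z) = z"
  using DD_mult_left[OF smooth_mult_left, of x "- x" x z] by (simp add: DD_ident dL_def Dr_def)

lemma unitriangular_dL: "unitriangular deg (dL x)"
  by (rule unitriangular_right_inverse[OF linear_Dr Dr_neg_dL unitriangular_Dr_neg])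

lemma Dr_eq_dL_Dr_neg: "Dr a x z = dL (gmul a x) (Dr (- x) x z)"
proof -
  have "(\<lambda>y. gmul a (gmul x y)) = gmul (gmul a x)"
    by (simp add: fun_eq_iff mult_assoc)
  then have "Dr a x (dL x z') = dL (gmul a x) z'" for z'
    using DD_mult_left[OF smooth_mult_left, of a x 0 z'] by (simp add: dL_def Dr_def)
  from this[of "Dr (- x) x z"] show ?thesis by (simp add: dL_Dr_neg)
qed

lemma unitriangular_Dr: "unitriangular deg (Dr a x)"
proof -
  have "Dr a x = (\<lambda>z. dL (gmul a x) (Dr (- x) x z))"
    by (rule ext) (rule Dr_eq_dL_Dr_neg)
  then show ?thesis
    using unitriangular_comp[OF linear_dL unitriangular_dL unitriangular_Dr_neg] by simp
qed

lemma Dl_eq_Dr: "Dl x a z = Dr (- a) (- x) z"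
proof -
  have "(\<lambda>y. gmul y a) = (\<lambda>y. - gmul (- a) (- y))"
    by (simp add: neg_mult fun_eq_iff)
  then have "Dl x a z = - Dr (- a) (- x) (- z)"
    unfolding Dl_def
    using DD_mult_left[OF smooth_minus[OF smooth_ident], of "- a" x z]
    by (simp add: DD_minus smooth_mult smooth_intros DD_ident)
  then show ?thesis by (simp add: linear_neg[OF linear_Dr])
qed

lemma unitriangular_Dl: "unitriangular deg (Dl x a)"
  using unitriangular_Dr by (simp add: Dl_eq_Dr[abs_def])

lemma Ad_eq_Dl_dL: "Ad g z = Dl g (- g) (dL g z)"
  using DD_mult_right[OF smooth_mult_left, of g "- g" 0 z]
  by (simp add: Ad_def gconj_def[abs_def] dL_def Dr_def)

lemma unitriangular_Ad: "unitriangular deg (Ad g)"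
  using unitriangular_comp[OF linear_Dl unitriangular_Dl unitriangular_dL]
  by (simp add: Ad_eq_Dl_dL[abs_def])

end

lemma expX_component [simp]: "expX j s $ j = s"
  by (simp add: expX_def)

lemma expX_zero [simp]: "expX j 0 = 0"
  by (simp add: expX_def)

lemma hyp_diffeo_jac1I:
  fixes deg :: "'n::finite \<Rightarrow> nat"
  assumes "smooth F" "smooth G"
    and "\<And>x. x \<in> S \<Longrightarrow> F x \<in> T \<and> G (F x) = x"
    and "\<And>y. y \<in> T \<Longrightarrow> G y \<in> S \<and> F (G y) = y"
    and "\<And>x i k. x \<in> S \<Longrightarrow> i \<noteq> j \<Longrightarrow> k \<noteq> j \<Longrightarrow> deg k \<le> deg i \<Longrightarrow>
      DD F x (axis i 1) $ k = (if k = i then 1 else 0)"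
  shows "hyp_diffeo_jac1 j S T F"
  unfolding hyp_diffeo_jac1_def
proof (intro conjI)
  show "bij_betw F S T"
    by (rule bij_betw_byWitness[where f'=G]) (use assms(3,4) in auto)
  show "smooth_near S F"
    "\<exists>G. smooth_near T G \<and> (\<forall>y\<in>T. G y \<in> S \<and> F (G y) = y) \<and> (\<forall>x\<in>S. G (F x) = x)"
    using assms(1-4) smooth_on_UNIV_iff unfolding smooth_near_def by blast+
  show "\<forall>x\<in>S. det_on {k. k \<noteq> j} (\<lambda>k i. DD F x (axis i 1) $ k) = 1"
    using assms(5) by (auto intro!: det_on_unitriangular[where deg = deg])
qed

lemma (in carnot_group) mult_expX_expX: "gmul (expX j a) (expX j b) = expX j (a + b)"
  unfolding expX_def by (rule mult_scaleR_scaleR)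

locale carnot_group_deg1 = carnot_group +
  fixes j
  assumes deg_j: "deg j = 1"
begin

lemma mult_component: "gmul a x $ j = a $ j + x $ j"
proof -
  define \<phi> where "\<phi> x = gmul a x $ j - x $ j" for x
  have s\<phi>: "smooth \<phi>"
    unfolding \<phi>_def[abs_def] by (intro smooth_intros smooth_vec_nth[OF smooth_mult_left])
  have "deg j \<le> deg i" for i
    using deg_ge_1[of i] deg_j by simp
  then have "DD \<phi> y z = 0" for y z
    unfolding \<phi>_def[abs_def]
    using unitriangular_component_min_deg[OF linear_Dr unitriangular_Dr]
    by (simp add: DD_diff DD_vec_nth smooth_intros smooth_mult_left smooth_vec_nth[OF smooth_mult_left]
        DD_ident Dr_def)
  then have "\<phi> x = \<phi> 0" by (rule DD_zero_imp_constant[OF s\<phi>])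
  then show ?thesis by (simp add: \<phi>_def)
qed

lemma Pr_eq: "Pr gmul j x = gmul x (expX j (- (x $ j)))"
  unfolding Pr_def
proof (rule the_equality)
  show "gmul x (expX j (- (x $ j))) \<in> Pi_hyp 0 j \<and> x = gmul (gmul x (expX j (- (x $ j)))) (expX j (x $ j))"
    by (simp add: Pi_hyp_def mult_component mult_assoc mult_expX_expX)
next
  fix p assume p: "p \<in> Pi_hyp 0 j \<and> x = gmul p (expX j (x $ j))"
  define t where "t = x $ j"
  from p have "x = gmul p (expX j t)" by (simp add: t_def)
  then have "gmul x (expX j (- t)) = p" by (simp add: mult_assoc mult_expX_expX)
  then show "p = gmul x (expX j (- (x $ j)))" by (simp add: t_def)
qed

lemma smooth_Pr: "smooth (Pr gmul j)"
proof -
  have "Pr gmul j = (\<lambda>x. gmul x ((- (x $ j)) *\<^sub>R axis j 1))"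
    by (simp add: fun_eq_iff Pr_eq expX_def)
  then show ?thesis by (simp add: smooth_mult smooth_intros)
qed

lemma hyp_diffeo_jac1_left_translation:
  "hyp_diffeo_jac1 j (Pi_hyp s j) (Pi_hyp 0 j) (\<lambda>x. gmul (expX j (- s)) x)"
proof (rule hyp_diffeo_jac1I[where G = "gmul (expX j s)" and deg = deg])
  show "smooth (gmul (expX j (- s)))" "smooth (gmul (expX j s))"
    by (rule smooth_mult_left)+
  show "gmul (expX j (- s)) x \<in> Pi_hyp 0 j \<and> gmul (expX j s) (gmul (expX j (- s)) x) = x"
    if "x \<in> Pi_hyp s j" for x
    using that by (simp add: Pi_hyp_def mult_component flip: mult_assoc) (simp add: mult_expX_expX)
  show "gmul (expX j s) y \<in> Pi_hyp s j \<and> gmul (expX j (- s)) (gmul (expX j s) y) = y"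
    if "y \<in> Pi_hyp 0 j" for y
    using that by (simp add: Pi_hyp_def mult_component flip: mult_assoc) (simp add: mult_expX_expX)
  show "DD (gmul (expX j (- s))) x (axis i 1) $ k = (if k = i then 1 else 0)" if "deg k \<le> deg i" for x i k
    using unitriangular_Dr that unfolding unitriangular_def Dr_def by blast
qed

lemma hyp_diffeo_jac1_right_translation:
  "hyp_diffeo_jac1 j (Pi_hyp s j) (Pi_hyp 0 j) (\<lambda>x. gmul x (expX j (- s)))"
proof (rule hyp_diffeo_jac1I[where G = "\<lambda>y. gmul y (expX j s)" and deg = deg])
  show "smooth (\<lambda>x. gmul x (expX j (- s)))" "smooth (\<lambda>y. gmul y (expX j s))"
    by (rule smooth_mult_right)+
  show "gmul x (expX j (- s)) \<in> Pi_hyp 0 j \<and> gmul (gmul x (expX j (- s))) (expX j s) = x"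
    if "x \<in> Pi_hyp s j" for x
    using that by (simp add: Pi_hyp_def mult_component mult_assoc mult_expX_expX)
  show "gmul y (expX j s) \<in> Pi_hyp s j \<and> gmul (gmul y (expX j s)) (expX j (- s)) = y"
    if "y \<in> Pi_hyp 0 j" for y
    using that by (simp add: Pi_hyp_def mult_component mult_assoc mult_expX_expX)
  show "DD (\<lambda>x. gmul x (expX j (- s))) x (axis i 1) $ k = (if k = i then 1 else 0)"
    if "deg k \<le> deg i" for x i k
    using unitriangular_Dl that unfolding unitriangular_def Dl_def by blast
qed

lemma DD_Pr_axis:
  assumes "i \<noteq> j"
  shows "DD (Pr gmul j) x (axis i 1) = Dl x (expX j (- (x $ j))) (axis i 1)"
proof -
  have "Pr gmul j = (\<lambda>x. gmul x ((- (x $ j)) *\<^sub>R axis j 1))"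
    by (simp add: fun_eq_iff Pr_eq expX_def)
  then show ?thesis
    using assms DD_mult[OF smooth_ident, of "\<lambda>x. (- (x $ j)) *\<^sub>R axis j 1" x "axis i 1"]
    by (simp add: smooth_intros DD_scaleR DD_minus DD_vec_nth DD_ident DD_const linear_0[OF linear_Dr]
        expX_def axis_def)
qed

lemma hyp_diffeo_jac1_Pr: "hyp_diffeo_jac1 j (Pi_hyp s j) (Pi_hyp 0 j) (Pr gmul j)"
proof (rule hyp_diffeo_jac1I[where G = "\<lambda>y. gmul y (expX j s)" and deg = deg])
  show "smooth (Pr gmul j)" "smooth (\<lambda>y. gmul y (expX j s))"
    by (rule smooth_Pr smooth_mult_right)+
  show "Pr gmul j x \<in> Pi_hyp 0 j \<and> gmul (Pr gmul j x) (expX j s) = x"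
    if "x \<in> Pi_hyp s j" for x
    using that by (simp add: Pr_eq Pi_hyp_def mult_component mult_assoc mult_expX_expX)
  show "gmul y (expX j s) \<in> Pi_hyp s j \<and> Pr gmul j (gmul y (expX j s)) = y"
    if "y \<in> Pi_hyp 0 j" for y
    using that by (simp add: Pr_eq Pi_hyp_def mult_component mult_assoc mult_expX_expX)
  show "DD (Pr gmul j) x (axis i 1) $ k = (if k = i then 1 else 0)"
    if "i \<noteq> j" "deg k \<le> deg i" for x i k
    using unitriangular_Dl that unfolding unitriangular_def DD_Pr_axis[OF \<open>i \<noteq> j\<close>] by blast
qed

lemma DD_Pr_along_curve: "DD (Pr gmul j) x (XX gmul i x) = DD (\<lambda>t::real. Pr gmul j (gmul x (t *\<^sub>R axis i 1))) 0 1"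
  using DD_compose[OF smooth_Pr smooth_mult[OF smooth_const], of "\<lambda>t. t *\<^sub>R axis i 1" x 0 1]
  by (simp add: smooth_intros DD_mult_ray XX_eq_dL)

lemma DD_Pr_XX_self: "DD (Pr gmul j) x (XX gmul j x) = 0"
proof -
  have "Pr gmul j (gmul x (t *\<^sub>R axis j 1)) = Pr gmul j x" for t
    by (simp add: Pr_eq mult_component mult_assoc mult_expX_expX flip: expX_def)
  then show ?thesis unfolding DD_Pr_along_curve by (simp add: DD_const)
qed

lemma DD_Pr_XX:
  assumes "i \<noteq> j"
  shows "DD (Pr gmul j) x (XX gmul i x) = dL (Pr gmul j x) (Ad (expX j (x $ j)) (axis i 1))"
proof -
  let ?g = "expX j (x $ j)"
  have neg: "expX j (- (x $ j)) = - ?g"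
    by (simp add: expX_def)
  have "gmul x (t *\<^sub>R axis i 1) $ j = x $ j" for t
    using assms by (simp add: mult_component axis_def)
  then have "Pr gmul j (gmul x (t *\<^sub>R axis i 1)) = gmul (Pr gmul j x) (gconj ?g (t *\<^sub>R axis i 1))" for t
    by (simp add: Pr_eq neg gconj_def mult_assoc)
  moreover have "DD (\<lambda>t::real. gconj ?g (t *\<^sub>R axis i 1)) 0 1 = Ad ?g (axis i 1)"
    using DD_compose[OF smooth_gconj, of "\<lambda>t. t *\<^sub>R axis i 1" ?g 0 1]
    by (simp add: smooth_intros DD_ray Ad_def)
  moreover have "smooth (\<lambda>t::real. gconj ?g (t *\<^sub>R axis i 1))"
    by (intro smooth_compose[OF smooth_gconj] smooth_intros)
  ultimately show ?thesis
    unfolding DD_Pr_along_curve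
    using DD_mult_left[of "\<lambda>t. gconj ?g (t *\<^sub>R axis i 1)" "Pr gmul j x" 0 1]
    by (simp add: gconj_def dL_def)
qed

lemma Pr_Jacobian:
  "\<exists>T. (\<forall>i. i \<noteq> j \<longrightarrow>
          DD (Pr gmul j) x (XX gmul i x) = (\<Sum>k\<in>{k. k \<noteq> j}. T k i *\<^sub>R XX gmul k (Pr gmul j x))) \<and>
       det_on {k. k \<noteq> j} T = 1"
proof (intro exI conjI allI impI)
  define T where "T k i = Ad (expX j (x $ j)) (axis i 1) $ k" for k i
  have unitri: "deg k \<le> deg i \<Longrightarrow> T k i = (if k = i then 1 else 0)" for k i
    using unitriangular_Ad unfolding unitriangular_def T_def by blast
  then show "det_on {k. k \<noteq> j} T = 1"
    by (intro det_on_unitriangular[where deg = deg]) auto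
  fix i assume "i \<noteq> j"
  then have "T j i = 0"
    using unitri[of j i] deg_j deg_ge_1[of i] by simp
  then have "(\<Sum>k\<in>UNIV. T k i *\<^sub>R XX gmul k (Pr gmul j x))
      = (\<Sum>k\<in>{k. k \<noteq> j}. T k i *\<^sub>R XX gmul k (Pr gmul j x))"
    by (intro sum.mono_neutral_right) auto
  moreover have "dL (Pr gmul j x) (Ad (expX j (x $ j)) (axis i 1)) = (\<Sum>k\<in>UNIV. T k i *\<^sub>R XX gmul k (Pr gmul j x))"
    unfolding T_def XX_eq_dL by (rule linear_axis_expansion[OF linear_dL])
  ultimately show "DD (Pr gmul j) x (XX gmul i x) = (\<Sum>k\<in>{k. k \<noteq> j}. T k i *\<^sub>R XX gmul k (Pr gmul j x))"
    using DD_Pr_XX[OF \<open>i \<noteq> j\<close>] by simp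
qed

end

theorem mainTheorem14:
  fixes gmul :: "real^'n::finite \<Rightarrow> real^'n \<Rightarrow> real^'n"
    and deg :: "'n \<Rightarrow> nat" and m :: nat and j :: 'n
  assumes "carnot gmul deg m"
    and "deg j = 1"
  shows "(\<forall>s::real.
            hyp_diffeo_jac1 j (Pi_hyp s j) (Pi_hyp 0 j) (\<lambda>x. gmul (expX j (- s)) x) \<and>
            hyp_diffeo_jac1 j (Pi_hyp s j) (Pi_hyp 0 j) (\<lambda>x. gmul x (expX j (- s))) \<and>
            hyp_diffeo_jac1 j (Pi_hyp s j) (Pi_hyp 0 j) (Pr gmul j))
      \<and> (\<forall>x. Pr gmul j differentiable (at x) \<and>
             frechet_derivative (Pr gmul j) (at x) (XX gmul j x) = 0 \<and>
             (\<exists>T. (\<forall>i. i \<noteq> j \<longrightarrow>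
                     frechet_derivative (Pr gmul j) (at x) (XX gmul i x)
                       = (\<Sum>k\<in>{k. k \<noteq> j}. T k i *\<^sub>R XX gmul k (Pr gmul j x))) \<and>
                  det_on {k. k \<noteq> j} T = 1))"
proof -
  interpret carnot_group_deg1 gmul deg m j
    by (intro carnot_group_deg1.intro carnot_group.intro carnot_group_deg1_axioms.intro assms)
  have "Pr gmul j differentiable (at x)" for x
    using smooth_has_derivative[OF smooth_Pr] unfolding differentiable_def by blast
  then show ?thesis
    using hyp_diffeo_jac1_left_translation hyp_diffeo_jac1_right_translation hyp_diffeo_jac1_Pr
      DD_Pr_XX_self Pr_Jacobian
    by blast
qed

end
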